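(* Let $p_1,\dots,p_m\in\mathbb R$, let $\sigma$ be any permutation with $p_{\sigma(1)}\le\dots\le p_{\sigma(m)}$, $p_{(k)}=p_{\sigma(k)}$, $R_k=\{\sigma(1),\dots,\sigma(k)\}$, $R_k^\dagger=\{i:p_i\le p_{(k)}\}$, and let $f:\mathbb R\to\mathbb R$ be any function. Consider the reference families $\mathfrak R=(R_k,f(p_{(k)})\wedge k)_{1\le k\le m}$, $\mathfrak R^\sim=(R_k,f(p_{(k)}))_{1\le k\le m}$ and $\mathfrak R^\dagger=(R_k^\dagger,f(p_{(k)}))_{1\le k\le m}$. Then for all $S\subseteq\{1,\dots,m\}$, $$\hat V^{\mathrm{JER}}_{\mathfrak R}(S)=\hat V^{\mathrm{JER}}_{\mathfrak R^\sim}(S)=\hat V^{\mathrm{JER}}_{\mathfrak R^\dagger}(S).$$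
   Context: For a reference family $\mathfrak R=(R_k,\zeta_k)_{k\in\mathcal K}$ (subsets $R_k\subseteq\{1,\dots,m\}$, reals $\zeta_k$): $\mathfrak A(\mathfrak R)=\{A\subseteq\{1,\dots,m\}:\forall k\in\mathcal K,\ |R_k\cap A|\le\zeta_k\}$ and $\hat V^{\mathrm{JER}}_{\mathfrak R}(S)=\max_{A\in\mathfrak A(\mathfrak R)}|S\cap A|$ (the statement is understood with any fixed convention for the maximum over an empty set). *)

theory Defs
  imports Main "HOL.Real"
begin

definition jer_A :: "nat \<Rightarrow> 'k set \<Rightarrow> ('k \<Rightarrow> nat set) \<Rightarrow> ('k \<Rightarrow> real) \<Rightarrow> nat set set" where
  "jer_A m K R \<zeta> = {A. A \<subseteq> {1..m} \<and> (\<forall>k\<in>K. real (card (R k \<inter> A)) \<le> \<zeta> k)}"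

text \<open>Max over the empty set is the fixed (unspecified) value Max {}.\<close>
definition jer_V :: "nat \<Rightarrow> 'k set \<Rightarrow> ('k \<Rightarrow> nat set) \<Rightarrow> ('k \<Rightarrow> real) \<Rightarrow> nat set \<Rightarrow> nat" where
  "jer_V m K R \<zeta> S = Max ((\<lambda>A. card (S \<inter> A)) ` jer_A m K R \<zeta>)"

end

theory Submission
  imports Defs
begin

text \<open>All three families admit the same sets A, so the maxima agree. Capping the bound of
  R_k at k changes nothing because |R_k \<inter> A| \<le> k anyway. Each R_k is contained in its
  dagger version, and the dagger version is itself the prefix R_k' for the last position
  k' \<ge> k of a tie with p_(k), which carries the same bound f(p_(k)).\<close>

lemma jer_A_antimono:
  assumes "\<And>k'. k' \<in> K' \<Longrightarrow> \<exists>k\<in>K. R' k' \<subseteq> R k \<and> \<zeta> k \<le> \<zeta>' k'"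
  shows "jer_A m K R \<zeta> \<subseteq> jer_A m K' R' \<zeta>'"
proof
  fix A assume A: "A \<in> jer_A m K R \<zeta>"
  have "real (card (R' k' \<inter> A)) \<le> \<zeta>' k'" if "k' \<in> K'" for k'
  proof -
    obtain k where k: "k \<in> K" "R' k' \<subseteq> R k" "\<zeta> k \<le> \<zeta>' k'"
      using assms[OF \<open>k' \<in> K'\<close>] by blast
    have "finite A" using A finite_subset by (auto simp: jer_A_def)
    then have "card (R' k' \<inter> A) \<le> card (R k \<inter> A)"
      using k(2) by (intro card_mono) auto
    also have "real (card (R k \<inter> A)) \<le> \<zeta> k" using A k(1) by (simp add: jer_A_def)
    finally show ?thesis using k(3) by linarith
  qed
  then show "A \<in> jer_A m K' R' \<zeta>'" using A by (simp add: jer_A_def)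
qed

lemma jer_A_min_card_bound:
  assumes "\<And>k. k \<in> K \<Longrightarrow> finite (R k) \<and> real (card (R k)) \<le> b k"
  shows "jer_A m K R (\<lambda>k. min (\<zeta> k) (b k)) = jer_A m K R \<zeta>"
proof -
  have "real (card (R k \<inter> A)) \<le> b k" if "k \<in> K" for k A
  proof -
    have "card (R k \<inter> A) \<le> card (R k)" using assms[OF that] by (intro card_mono) auto
    then show ?thesis using assms[OF that] by linarith
  qed
  then show ?thesis unfolding jer_A_def by auto
qed

locale sorting_permutation =
  fixes m :: nat and p :: "nat \<Rightarrow> real" and \<sigma> :: "nat \<Rightarrow> nat"
  assumes perm: "bij_betw \<sigma> {1..m} {1..m}"
    and sorted: "\<And>i j. 1 \<le> i \<Longrightarrow> i \<le> j \<Longrightarrow> j \<le> m \<Longrightarrow> p (\<sigma> i) \<le> p (\<sigma> j)"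
begin

lemma prefix_subset_sublevel_set:
  assumes "k \<le> m"
  shows "\<sigma> ` {1..k} \<subseteq> {i\<in>{1..m}. p i \<le> p (\<sigma> k)}"
proof
  fix i assume "i \<in> \<sigma> ` {1..k}"
  then obtain j where j: "j \<in> {1..k}" "i = \<sigma> j" by blast
  then have "i \<in> {1..m}" using bij_betw_apply[OF perm] assms by auto
  moreover have "p i \<le> p (\<sigma> k)" using sorted[of j k] j assms by simp
  ultimately show "i \<in> {i\<in>{1..m}. p i \<le> p (\<sigma> k)}" by blast
qed

lemma sublevel_set_eq_prefix:
  assumes k: "k \<in> {1..m}"
  obtains k' where "k' \<in> {1..m}" "p (\<sigma> k') = p (\<sigma> k)"
    "{i\<in>{1..m}. p i \<le> p (\<sigma> k)} = \<sigma> ` {1..k'}"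
proof
  define J where "J = {j\<in>{1..m}. p (\<sigma> j) \<le> p (\<sigma> k)}"
  have "finite J" "k \<in> J" using k by (auto simp: J_def)
  then have "Max J \<in> J" "k \<le> Max J" by (auto intro: Max_in)
  then show k': "Max J \<in> {1..m}" and eq: "p (\<sigma> (Max J)) = p (\<sigma> k)"
    using sorted[of k "Max J"] k by (auto simp: J_def)
  have "{i\<in>{1..m}. p i \<le> p (\<sigma> k)} \<subseteq> \<sigma> ` J"
  proof
    fix i assume i: "i \<in> {i\<in>{1..m}. p i \<le> p (\<sigma> k)}"
    then obtain j where "j \<in> {1..m}" "i = \<sigma> j"
      using bij_betw_imp_surj_on[OF perm] by blast
    with i show "i \<in> \<sigma> ` J" by (auto simp: J_def)
  qed
  also have "\<dots> \<subseteq> \<sigma> ` {1..Max J}"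
    using \<open>finite J\<close> by (auto simp: J_def)
  finally show "{i\<in>{1..m}. p i \<le> p (\<sigma> k)} = \<sigma> ` {1..Max J}"
    using prefix_subset_sublevel_set[of "Max J"] k' eq by auto
qed

end

theorem mainTheorem20:
  fixes m :: nat and p :: "nat \<Rightarrow> real" and \<sigma> :: "nat \<Rightarrow> nat"
    and f :: "real \<Rightarrow> real" and S :: "nat set"
  assumes perm: "bij_betw \<sigma> {1..m} {1..m}"
    and sorted: "\<And>i j. 1 \<le> i \<Longrightarrow> i \<le> j \<Longrightarrow> j \<le> m \<Longrightarrow> p (\<sigma> i) \<le> p (\<sigma> j)"
    and S: "S \<subseteq> {1..m}"
  shows "jer_V m {1..m} (\<lambda>k. \<sigma> ` {1..k}) (\<lambda>k. min (f (p (\<sigma> k))) (real k)) S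
           = jer_V m {1..m} (\<lambda>k. \<sigma> ` {1..k}) (\<lambda>k. f (p (\<sigma> k))) S
       \<and> jer_V m {1..m} (\<lambda>k. \<sigma> ` {1..k}) (\<lambda>k. f (p (\<sigma> k))) S
           = jer_V m {1..m} (\<lambda>k. {i\<in>{1..m}. p i \<le> p (\<sigma> k)}) (\<lambda>k. f (p (\<sigma> k))) S"
proof -
  interpret sorting_permutation m p \<sigma> using perm sorted by unfold_locales
  let ?R = "\<lambda>k. \<sigma> ` {1..k}" and ?R\<^sub>d = "\<lambda>k. {i\<in>{1..m}. p i \<le> p (\<sigma> k)}"
    and ?\<zeta> = "\<lambda>k. f (p (\<sigma> k))"
  have capped: "jer_A m {1..m} ?R (\<lambda>k. min (?\<zeta> k) (real k)) = jer_A m {1..m} ?R ?\<zeta>"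
    by (rule jer_A_min_card_bound) (use card_image_le[of "{1..k}" \<sigma> for k] in auto)
  have "jer_A m {1..m} ?R ?\<zeta> \<subseteq> jer_A m {1..m} ?R\<^sub>d ?\<zeta>"
  proof (rule jer_A_antimono)
    fix k assume "k \<in> {1..m}"
    then obtain k' where "k' \<in> {1..m}" "p (\<sigma> k') = p (\<sigma> k)" "?R\<^sub>d k = ?R k'"
      by (rule sublevel_set_eq_prefix)
    then show "\<exists>k'\<in>{1..m}. ?R\<^sub>d k \<subseteq> ?R k' \<and> ?\<zeta> k' \<le> ?\<zeta> k" by auto
  qed
  moreover have "jer_A m {1..m} ?R\<^sub>d ?\<zeta> \<subseteq> jer_A m {1..m} ?R ?\<zeta>"
    using prefix_subset_sublevel_set by (intro jer_A_antimono) (meson atLeastAtMost_iff order_refl)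
  ultimately have "jer_A m {1..m} ?R ?\<zeta> = jer_A m {1..m} ?R\<^sub>d ?\<zeta>" by (rule equalityI)
  then show ?thesis unfolding jer_V_def capped by simp
qed

end
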